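(* Assume Hypotheses (LD) and (LD0). Then for every $\delta_0>0$ there exists an open neighborhood $V_0$ of $M_0$ such that $$\lim_{\varepsilon\to0}\frac{\beta_{\delta_0}(\varepsilon)}{\inf_{x\in V_0}p^\varepsilon(x,M_0)}=0.$$
   Context: Setting. Let $M\subset\mathbb{R}^d$ be closed; all topological notions are relative to $M$. Let $F:M\to M$ be continuous with $\|F\|:=\sup_{x\in M}\|F(x)\|<\infty$. For $A\subset M$ and $\delta>0$, put $N^\delta(A)=\{x\in M:\inf_{y\in A}\|x-y\|<\delta\}$, and let $d(x,y)=\max_i|x_i-y_i|$. Let $\{X^\varepsilon\}_{\varepsilon>0}$ be a family of time-homogeneous Markov chains on $M$ with transition kernels $p^\varepsilon(x,\Gamma)$. Put $\beta_\delta(\varepsilon):=\sup_{x\in M}p^\varepsilon(x,M\setminus N^\delta(F(x)))$. Assume $M=M_0\cup M_1$ (disjoint), where $M_0$ is closed, $F(M_0)\subseteq M_0$, $F(M_1)\subseteq M_1$, and $p^\varepsilon(x,M_1)=0$ for all $\varepsilon>0$ and $x\in M_0$. Hypothesis (LD). There is $\rho:M\times M\to[0,+\infty]$ such that: (i) $\rho$ is continuous on $M_1\times M$; (ii) $\rho(x,y)=0$ iff $y=F(x)$; (iii) for every $\beta>0$, $\inf\{\rho(x,y):x,y\in M,\ d(F(x),y)>\beta\}>0$; (iv) lower bound: for every compact $K\subset M_1$, every open ball $U$ of $M$ and every $\eta>0$, there is $\varepsilon_0>0$ such that $\varepsilon\log p^\varepsilon(x,U)\ge-\inf_{y\in U}\rho(x,y)-\eta$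 for all $x\in K$ and $\varepsilon<\varepsilon_0$; (v) upper bound: for every closed $C\subset M$ and every $\eta>0$, there is $\varepsilon_0>0$ such that $\varepsilon\log p^\varepsilon(x,C)\le-\inf_{y\in C}\rho(x,y)+\eta$ for all $x\in M$ and $\varepsilon<\varepsilon_0$. Hypothesis (LD0). For every $c>0$ there is an open neighborhood $V_0$ of $M_0$ with $\liminf_{\varepsilon\to0}\inf_{x\in V_0}\varepsilon\log p^\varepsilon(x,M_0)\ge-c$. *)

theory Defs
  imports "HOL-Probability.Probability"
begin

definition dmax :: "real^'d \<Rightarrow> real^'d \<Rightarrow> real" where
  "dmax x y = Max (range (\<lambda>i. \<bar>x$i - y$i\<bar>))"

definition elog :: "real \<Rightarrow> ereal" where
  "elog t = (if t > 0 then ereal (ln t) else -\<infinity>)"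

definition pk :: "(real \<Rightarrow> real^'d \<Rightarrow> (real^'d) measure) \<Rightarrow> real \<Rightarrow> real^'d \<Rightarrow> (real^'d) set \<Rightarrow> real" where
  "pk K e x G = measure (K e x) G"

definition beta :: "(real \<Rightarrow> real^'d \<Rightarrow> (real^'d) measure) \<Rightarrow> (real^'d) set \<Rightarrow> (real^'d \<Rightarrow> real^'d)
    \<Rightarrow> real \<Rightarrow> real \<Rightarrow> ereal" where
  "beta K M F \<delta> e = (SUP x\<in>M. ereal (pk K e x (M - {y\<in>M. norm (y - F x) < \<delta>})))"

end

theory Submission
  imports Defs "HOL-Real_Asymp.Real_Asymp"
begin

(* Fix delta0 > 0.  By (LD iii) there is a real c > 0 with
   rho x y >= c whenever |y - F x| >= delta0/2.  Cover the bounded set F(M)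
   by finitely many balls B(t, delta0/4); the set of points at distance
   >= delta0 from F x lies in the closed set C_t = M - B(t, 3 delta0/4) for a
   centre t near F x, and every point of C_t is at distance >= delta0/2 from
   F x.  Applying the upper bound (LD v) to the finitely many C_t gives the
   uniform estimate beta_{delta0}(e) <= exp(-(3c/4)/e) for small e.  On the
   other hand (LD0) with constant c/4 gives a neighbourhood V0 of M0 with
   p^e(x, M0) >= exp(-(c/2)/e) uniformly on V0 for small e. *)

lemma norm_le_card_dmax: "norm (a - b) \<le> real CARD('d) * dmax (a::real^'d) b"
proof -
  have "norm (a - b) \<le> (\<Sum>i\<in>UNIV. \<bar>(a - b)$i\<bar>)" by (rule norm_le_l1_cart)
  also have "\<dots> \<le> (\<Sum>i\<in>(UNIV::'d set). dmax a b)"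
    by (intro sum_mono) (auto simp: dmax_def intro!: Max_ge)
  finally show ?thesis by simp
qed

lemma elog_upper_bound:
  assumes "e > 0" "p \<ge> 0" "ereal e * elog p \<le> ereal r"
  shows "p \<le> exp (r / e)"
proof (cases "p > 0")
  case True
  then have "ln p \<le> r / e" using assms by (simp add: elog_def field_simps)
  then show ?thesis using True by (metis exp_ln exp_le_cancel_iff)
qed (use assms in simp)

lemma elog_lower_bound:
  assumes "e > 0" "ereal r < ereal e * elog p"
  shows "exp (r / e) \<le> p"
proof (cases "p > 0")
  case True
  then have "r / e < ln p" using assms by (simp add: elog_def field_simps)
  then show ?thesis using True by (metis exp_ln exp_le_cancel_iff less_imp_le)
qed (use assms in \<open>simp add: elog_def\<close>)

lemma rate_bounded_below_far:
  fixes F :: "real^'d \<Rightarrow> real^'d" and \<rho> :: "real^'d \<Rightarrow> real^'d \<Rightarrow> ereal"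
  assumes rate_gap: "\<And>b. b > 0 \<Longrightarrow>
      0 < (INF xy\<in>{(x, y). x \<in> M \<and> y \<in> M \<and> dmax (F x) y > b}. \<rho> (fst xy) (snd xy))"
    and "r > 0"
  shows "\<exists>c>0. \<forall>x\<in>M. \<forall>y\<in>M. r \<le> norm (y - F x) \<longrightarrow> ereal c \<le> \<rho> x y"
proof -
  define n where "n = real CARD('d)"
  have "n > 0" unfolding n_def by simp
  define b where "b = r / (2 * n)"
  have "b > 0" using \<open>r > 0\<close> \<open>n > 0\<close> unfolding b_def by simp
  define gap where
    "gap = (INF xy\<in>{(x, y). x \<in> M \<and> y \<in> M \<and> dmax (F x) y > b}. \<rho> (fst xy) (snd xy))"
  obtain c where c: "0 < c" "ereal c < gap"
    using rate_gap[OF \<open>b > 0\<close>] unfolding gap_def[symmetric]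
    by (metis ereal_dense2 ereal_less(2) less_trans zero_ereal_def)
  have "ereal c \<le> \<rho> x y" if "x \<in> M" "y \<in> M" "r \<le> norm (y - F x)" for x y
  proof -
    have "r \<le> n * dmax (F x) y"
      using norm_le_card_dmax[of "F x" y] that(3) by (simp add: n_def norm_minus_commute)
    then have "dmax (F x) y > b"
      using \<open>r > 0\<close> \<open>n > 0\<close> unfolding b_def by (simp add: field_simps)
    then have "gap \<le> \<rho> x y" unfolding gap_def
      using that by (intro INF_lower2[of "(x, y)"]) auto
    then show ?thesis using c by simp
  qed
  then show ?thesis using c(1) by blast
qed

lemma ball_complement_sandwich:
  fixes t z :: "'a::real_normed_vector"
  assumes "dist t z < \<delta> / 4"
  shows "M - {y\<in>M. norm (y - z) < \<delta>} \<subseteq> M - ball t (3 * \<delta> / 4)"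
    and "y \<in> M - ball t (3 * \<delta> / 4) \<Longrightarrow> \<delta> / 2 \<le> norm (y - z)"
proof -
  show "M - {y\<in>M. norm (y - z) < \<delta>} \<subseteq> M - ball t (3 * \<delta> / 4)"
  proof
    fix y assume "y \<in> M - {y\<in>M. norm (y - z) < \<delta>}"
    then show "y \<in> M - ball t (3 * \<delta> / 4)"
      using assms dist_triangle[of y z t] by (auto simp: dist_norm norm_minus_commute)
  qed
  show "\<delta> / 2 \<le> norm (y - z)" if "y \<in> M - ball t (3 * \<delta> / 4)"
    using that assms dist_triangle[of t y z] by (auto simp: dist_norm norm_minus_commute)
qed

text \<open>Uniform exponential smallness of the escape probability
  \<open>p\<^sup>e(x, M - N\<^sup>\<delta>(F x))\<close>: the upper bound (LD v), applied to finitely many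
  closed sets coming from a cover of the bounded set \<open>F(M)\<close>, gives decay at
  any rate below the lower bound \<open>c\<close> of \<open>\<rho>\<close> at distance \<open>\<delta>/2\<close>.\<close>
lemma escape_probability_bound:
  fixes M :: "(real^'d) set" and F :: "real^'d \<Rightarrow> real^'d"
    and K :: "real \<Rightarrow> real^'d \<Rightarrow> (real^'d) measure" and \<rho> :: "real^'d \<Rightarrow> real^'d \<Rightarrow> ereal"
  assumes M_closed: "closed M" and F_bdd: "bounded (F ` M)"
    and K_prob: "\<And>e x. e > 0 \<Longrightarrow> x \<in> M \<Longrightarrow> prob_space (K e x)"
    and K_sets: "\<And>e x. e > 0 \<Longrightarrow> x \<in> M \<Longrightarrow> sets (K e x) = sets borel"
    and LD_upper: "\<And>C \<eta>. closed C \<Longrightarrow> C \<subseteq> M \<Longrightarrow> \<eta> > 0 \<Longrightarrow>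
        \<exists>e0>0. \<forall>x\<in>M. \<forall>e. 0 < e \<and> e < e0 \<longrightarrow>
          ereal e * elog (pk K e x C) \<le> - (INF y\<in>C. \<rho> x y) + ereal \<eta>"
    and rate_far: "\<And>x y. x \<in> M \<Longrightarrow> y \<in> M \<Longrightarrow> \<delta> / 2 \<le> norm (y - F x) \<Longrightarrow> ereal c \<le> \<rho> x y"
    and "\<delta> > 0" "\<eta> > 0"
  shows "\<forall>\<^sub>F e in at_right 0. \<forall>x\<in>M.
           pk K e x (M - {y\<in>M. norm (y - F x) < \<delta>}) \<le> exp (- (c - \<eta>) / e)"
proof -
  obtain T where T: "finite T" "closure (F ` M) \<subseteq> (\<Union>t\<in>T. ball t (\<delta> / 4))"
  proof -
    have "compact (closure (F ` M))" using F_bdd by (simp add: compact_closure)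
    then show ?thesis
      using that compact_eq_totally_bounded \<open>\<delta> > 0\<close> by (metis divide_pos_pos zero_less_numeral)
  qed
  define C where "C t = M - ball t (3 * \<delta> / 4)" for t
  have C_closed: "closed (C t)" for t
    unfolding C_def using M_closed by (simp add: closed_Diff)
  have "\<forall>t\<in>T. \<forall>\<^sub>F e in at_right 0. 0 < e \<and> (\<forall>x\<in>M.
          ereal e * elog (pk K e x (C t)) \<le> - (INF y\<in>C t. \<rho> x y) + ereal \<eta>)"
  proof
    fix t
    have "C t \<subseteq> M" by (auto simp: C_def)
    then obtain e0 where "e0 > 0" "\<forall>x\<in>M. \<forall>e. 0 < e \<and> e < e0 \<longrightarrow>
          ereal e * elog (pk K e x (C t)) \<le> - (INF y\<in>C t. \<rho> x y) + ereal \<eta>"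
      using LD_upper[OF C_closed _ \<open>\<eta> > 0\<close>] by blast
    then show "\<forall>\<^sub>F e in at_right 0. 0 < e \<and> (\<forall>x\<in>M.
          ereal e * elog (pk K e x (C t)) \<le> - (INF y\<in>C t. \<rho> x y) + ereal \<eta>)"
      unfolding eventually_at_right_field by blast
  qed
  then have eventual_bounds: "\<forall>\<^sub>F e in at_right 0. \<forall>t\<in>T. 0 < e \<and> (\<forall>x\<in>M.
          ereal e * elog (pk K e x (C t)) \<le> - (INF y\<in>C t. \<rho> x y) + ereal \<eta>)"
    by (rule eventually_ball_finite[OF T(1)])
  have pointwise: "pk K e x (M - {y\<in>M. norm (y - F x) < \<delta>}) \<le> exp (- (c - \<eta>) / e)"
    if e: "0 < e" and x: "x \<in> M" and t: "dist t (F x) < \<delta> / 4"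
      and bound: "ereal e * elog (pk K e x (C t)) \<le> - (INF y\<in>C t. \<rho> x y) + ereal \<eta>"
    for e x t
  proof -
    have "ereal c \<le> (INF y\<in>C t. \<rho> x y)"
    proof (rule INF_greatest)
      fix y assume "y \<in> C t"
      then have "y \<in> M" "\<delta> / 2 \<le> norm (y - F x)"
        using ball_complement_sandwich(2)[OF t] unfolding C_def by auto
      then show "ereal c \<le> \<rho> x y" by (rule rate_far[OF x])
    qed
    then have "- (INF y\<in>C t. \<rho> x y) + ereal \<eta> \<le> - ereal c + ereal \<eta>"
      by (intro add_right_mono) (simp only: ereal_minus_le_minus)
    then have "ereal e * elog (pk K e x (C t)) \<le> ereal (- (c - \<eta>))"
      using bound by simp
    then have "pk K e x (C t) \<le> exp (- (c - \<eta>) / e)"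
      using e by (intro elog_upper_bound) (auto simp: pk_def)
    moreover have "pk K e x (M - {y\<in>M. norm (y - F x) < \<delta>}) \<le> pk K e x (C t)"
    proof -
      interpret prob_space "K e x" using K_prob e x by auto
      show ?thesis
        unfolding pk_def C_def using ball_complement_sandwich(1)[OF t] C_closed
        by (intro finite_measure_mono) (auto simp: K_sets[OF e x] C_def)
    qed
    ultimately show ?thesis by linarith
  qed
  have near_centre: "\<exists>t\<in>T. dist t (F x) < \<delta> / 4" if "x \<in> M" for x
  proof -
    have "F x \<in> closure (F ` M)" using that by (intro closure_subset[THEN subsetD] imageI)
    then have "F x \<in> (\<Union>t\<in>T. ball t (\<delta> / 4))" using T(2) by (rule subsetD[rotated])
    then show ?thesis by (simp only: UN_iff mem_ball)
  qed
  show ?thesis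
    using eventual_bounds
  proof (rule eventually_mono)
    fix e assume bounds: "\<forall>t\<in>T. 0 < e \<and> (\<forall>x\<in>M.
          ereal e * elog (pk K e x (C t)) \<le> - (INF y\<in>C t. \<rho> x y) + ereal \<eta>)"
    show "\<forall>x\<in>M. pk K e x (M - {y\<in>M. norm (y - F x) < \<delta>}) \<le> exp (- (c - \<eta>) / e)"
    proof
      fix x assume x: "x \<in> M"
      then obtain t where t: "t \<in> T" "dist t (F x) < \<delta> / 4" using near_centre by blast
      then show "pk K e x (M - {y\<in>M. norm (y - F x) < \<delta>}) \<le> exp (- (c - \<eta>) / e)"
        using bounds x by (intro pointwise) auto
    qed
  qed
qed

lemma uniform_lower_bound_from_Liminf:
  assumes "- ereal c < Liminf (at_right 0) (\<lambda>e. INF x\<in>V. ereal e * elog (f e x))"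
  shows "\<forall>\<^sub>F e in at_right 0. \<forall>x\<in>V. exp (- c / e) \<le> f e x"
proof -
  have "\<forall>\<^sub>F e in at_right 0. ereal (- c) < (INF x\<in>V. ereal e * elog (f e x))"
    using assms by (intro less_LiminfD) simp
  with eventually_at_right_less[of 0]
  show ?thesis
  proof eventually_elim
    case (elim e)
    show ?case
    proof
      fix x assume "x \<in> V"
      then have "ereal (- c) < ereal e * elog (f e x)"
        using elim(2) by (meson INF_lower less_le_trans)
      then show "exp (- c / e) \<le> f e x" by (rule elog_lower_bound[OF elim(1)])
    qed
  qed
qed

lemma exp_neg_inverse_tendsto_zero:
  assumes "a > 0" shows "((\<lambda>e. exp (- a / e)) \<longlongrightarrow> (0::real)) (at_right 0)"
  using assms by real_asymp

lemma ereal_divide_bounds: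
  assumes "0 \<le> b" "b \<le> ereal a" "ereal d \<le> D" "d > 0"
  shows "0 \<le> b / D" "b / D \<le> ereal (a / d)"
proof -
  obtain r where r: "b = ereal r" using assms by (cases b) auto
  show "0 \<le> b / D" using assms r by (cases D) auto
  show "b / D \<le> ereal (a / d)"
  proof (cases D)
    case (real t)
    have "0 \<le> r" "r \<le> a" "d \<le> t" using assms r real by auto
    then have "r / t \<le> a / d" using \<open>d > 0\<close> by (intro frac_le) auto
    then show ?thesis using real r \<open>d \<le> t\<close> \<open>d > 0\<close> by simp
  qed (use assms r in auto)
qed

lemma exponential_ratio_tendsto_zero:
  fixes B D :: "real \<Rightarrow> ereal"
  assumes "b < a"
    and num: "\<forall>\<^sub>F e in at_right 0. 0 \<le> B e \<and> B e \<le> ereal (exp (- a / e))"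
    and den: "\<forall>\<^sub>F e in at_right 0. ereal (exp (- b / e)) \<le> D e"
  shows "((\<lambda>e. B e / D e) \<longlongrightarrow> 0) (at_right 0)"
proof (rule tendsto_sandwich[OF _ _ tendsto_const])
  have exp_quot: "exp (- a / e) / exp (- b / e) = exp (- (a - b) / e)" for e
    by (subst exp_diff[symmetric]) (simp add: diff_divide_distrib)
  show "\<forall>\<^sub>F e in at_right 0. 0 \<le> B e / D e"
    using num den by eventually_elim (auto intro: ereal_divide_bounds(1))
  show "\<forall>\<^sub>F e in at_right 0. B e / D e \<le> ereal (exp (- (a - b) / e))"
    using num den
  proof eventually_elim
    case (elim e)
    then have "B e / D e \<le> ereal (exp (- a / e) / exp (- b / e))"
      by (intro ereal_divide_bounds(2)) auto
    then show "B e / D e \<le> ereal (exp (- (a - b) / e))" by (simp only: exp_quot)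
  qed
  show "((\<lambda>e. ereal (exp (- (a - b) / e))) \<longlongrightarrow> 0) (at_right 0)"
    using exp_neg_inverse_tendsto_zero[of "a - b"] \<open>b < a\<close>
    by (simp add: zero_ereal_def tendsto_ereal)
qed

theorem mainTheorem10:
  fixes M M0 M1 :: "(real^'d) set"
    and F :: "real^'d \<Rightarrow> real^'d"
    and K :: "real \<Rightarrow> real^'d \<Rightarrow> (real^'d) measure"
    and \<rho> :: "real^'d \<Rightarrow> real^'d \<Rightarrow> ereal"
  assumes M_closed: "closed M"
    and F_cont: "continuous_on M F" and F_maps: "F ` M \<subseteq> M" and F_bdd: "bounded (F ` M)"
    and K_prob: "\<And>e x. e > 0 \<Longrightarrow> x \<in> M \<Longrightarrow> prob_space (K e x)"
    and K_sets: "\<And>e x. e > 0 \<Longrightarrow> x \<in> M \<Longrightarrow> sets (K e x) = sets borel"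
    and K_supp: "\<And>e x. e > 0 \<Longrightarrow> x \<in> M \<Longrightarrow> emeasure (K e x) (UNIV - M) = 0"
    and M_split: "M = M0 \<union> M1" and M_disj: "M0 \<inter> M1 = {}"
    and M0_closed: "closed M0"
    and F_M0: "F ` M0 \<subseteq> M0" and F_M1: "F ` M1 \<subseteq> M1"
    and M0_absorb: "\<And>e x. e > 0 \<Longrightarrow> x \<in> M0 \<Longrightarrow> pk K e x M1 = 0"
    (* Hypothesis (LD) *)
    and rho_nonneg: "\<And>x y. x \<in> M \<Longrightarrow> y \<in> M \<Longrightarrow> \<rho> x y \<ge> 0"
    and LD_i: "continuous_on (M1 \<times> M) (\<lambda>z. \<rho> (fst z) (snd z))"
    and LD_ii: "\<And>x y. x \<in> M \<Longrightarrow> y \<in> M \<Longrightarrow> (\<rho> x y = 0 \<longleftrightarrow> y = F x)"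
    and LD_iii: "\<And>b. b > 0 \<Longrightarrow>
        0 < (INF xy\<in>{(x, y). x \<in> M \<and> y \<in> M \<and> dmax (F x) y > b}. \<rho> (fst xy) (snd xy))"
    and LD_iv: "\<And>C c r \<eta>. compact C \<Longrightarrow> C \<subseteq> M1 \<Longrightarrow> c \<in> M \<Longrightarrow> r > 0 \<Longrightarrow> \<eta> > 0 \<Longrightarrow>
        \<exists>e0>0. \<forall>x\<in>C. \<forall>e. 0 < e \<and> e < e0 \<longrightarrow>
          ereal e * elog (pk K e x (ball c r \<inter> M))
            \<ge> - (INF y\<in>ball c r \<inter> M. \<rho> x y) - ereal \<eta>"
    and LD_v: "\<And>C \<eta>. closed C \<Longrightarrow> C \<subseteq> M \<Longrightarrow> \<eta> > 0 \<Longrightarrow>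
        \<exists>e0>0. \<forall>x\<in>M. \<forall>e. 0 < e \<and> e < e0 \<longrightarrow>
          ereal e * elog (pk K e x C) \<le> - (INF y\<in>C. \<rho> x y) + ereal \<eta>"
    (* Hypothesis (LD0) *)
    and LD0: "\<And>c. c > 0 \<Longrightarrow> \<exists>V0. openin (top_of_set M) V0 \<and> M0 \<subseteq> V0 \<and>
        Liminf (at_right 0) (\<lambda>e. INF x\<in>V0. ereal e * elog (pk K e x M0)) \<ge> - ereal c"
    and delta0_pos: "\<delta>0 > 0"
  shows "\<exists>V0. openin (top_of_set M) V0 \<and> M0 \<subseteq> V0 \<and>
     (\<forall>\<^sub>F e in at_right 0. 0 < (INF x\<in>V0. ereal (pk K e x M0))) \<and>
     ((\<lambda>e. beta K M F \<delta>0 e / (INF x\<in>V0. ereal (pk K e x M0))) \<longlongrightarrow> 0) (at_right 0)"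
proof -
  obtain c where c: "c > 0" "\<And>x y. x \<in> M \<Longrightarrow> y \<in> M \<Longrightarrow> \<delta>0 / 2 \<le> norm (y - F x) \<Longrightarrow> ereal c \<le> \<rho> x y"
    using rate_bounded_below_far[OF LD_iii, of "\<delta>0 / 2"] delta0_pos by auto
  have escape: "\<forall>\<^sub>F e in at_right 0. \<forall>x\<in>M.
      pk K e x (M - {y\<in>M. norm (y - F x) < \<delta>0}) \<le> exp (- (c - c / 4) / e)"
    using c delta0_pos by (intro escape_probability_bound[OF M_closed F_bdd K_prob K_sets LD_v]) auto
  obtain V0 where V0: "openin (top_of_set M) V0" "M0 \<subseteq> V0"
    "- ereal (c / 4) \<le> Liminf (at_right 0) (\<lambda>e. INF x\<in>V0. ereal e * elog (pk K e x M0))"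
    using LD0[of "c / 4"] c(1) by auto
  have "- ereal (c / 2) < - ereal (c / 4)" using c(1) by simp
  then have absorb: "\<forall>\<^sub>F e in at_right 0. \<forall>x\<in>V0. exp (- (c / 2) / e) \<le> pk K e x M0"
    using V0(3) by (intro uniform_lower_bound_from_Liminf) (rule less_le_trans)
  have denominator: "\<forall>\<^sub>F e in at_right 0. ereal (exp (- (c / 2) / e)) \<le> (INF x\<in>V0. ereal (pk K e x M0))"
    using absorb by eventually_elim (auto intro: INF_greatest)
  have numerator: "\<forall>\<^sub>F e in at_right 0. 0 \<le> beta K M F \<delta>0 e \<and>
      beta K M F \<delta>0 e \<le> ereal (exp (- (c - c / 4) / e))" if "M \<noteq> {}"
    using escape
    by eventually_elim (use \<open>M \<noteq> {}\<close> in \<open>auto simp: beta_def pk_def intro!: SUP_upper2 SUP_least\<close>)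
  have "((\<lambda>e. beta K M F \<delta>0 e / (INF x\<in>V0. ereal (pk K e x M0))) \<longlongrightarrow> 0) (at_right 0)"
  proof (cases "V0 = {}")
    case False
    then have "M \<noteq> {}" using openin_subset[OF V0(1)] by auto
    then show ?thesis
      using c(1) by (intro exponential_ratio_tendsto_zero[OF _ numerator denominator]) auto
  qed (simp add: top_ereal_def)
  moreover have "\<forall>\<^sub>F e in at_right 0. 0 < (INF x\<in>V0. ereal (pk K e x M0))"
    using denominator by eventually_elim (meson exp_gt_zero ereal_less(2) less_le_trans zero_ereal_def)
  ultimately show ?thesis using V0(1,2) by blast
qed

end
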